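(* Assume $\mathrm{char}\,k=0$. For every integer $a\ge1$ there are isomorphisms of $\mathcal{O}_{nc}(\mathrm{GL}_2)$-comodules $$T^aV\otimes S^{a-1}V\cong T^{a-1}V\otimes R^{-1}\otimes S^aV,\qquad S^{a-1}V\otimes T^aV\cong S^aV\otimes R^{-1}\otimes T^{a-1}V.$$
   Context: $k$ algebraically closed. $\mathcal{O}_{nc}(\mathrm{GL}_2)$ is the Hopf algebra generated by $a,b,c,d,\delta,\delta^{-1}$ with relations $ac=ca$, $bd=db$, $ad-cb=\delta=da-bc$, $\delta\delta^{-1}=1=\delta^{-1}\delta$, $a\delta^{-1}d-b\delta^{-1}c=1=d\delta^{-1}a-c\delta^{-1}b$, $b\delta^{-1}a=a\delta^{-1}b$, $c\delta^{-1}d=d\delta^{-1}c$, with $\Delta(a)=a\otimes a+b\otimes c$, $\Delta(b)=a\otimes b+b\otimes d$, $\Delta(c)=c\otimes a+d\otimes c$, $\Delta(d)=c\otimes b+d\otimes d$, $\Delta(\delta^{\pm1})=\delta^{\pm1}\otimes\delta^{\pm1}$, antipode $S(a)=\delta^{-1}d$, $S(b)=-\delta^{-1}b$, $S(c)=-\delta^{-1}c$, $S(d)=\delta^{-1}a$, $S(\delta^{\pm1})=\delta^{\mp1}$. Left comodules; tensor products via multiplication; $W^*$ the right dual. $R=kr$ with $r\mapsto\delta\otimes r$, $R^{-1}=kr'$ with $r'\mapsto\delta^{-1}\otimes r'$. For $n\ge0$, $S^nV$ is the subcomodule of the regular comodule spanned by $b^id^{n-i}$, $0\le i\le n$, and $T^nV:=(S^nV)^*\otimes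 R$. *)

theory Defs
  imports "HOL-Library.Poly_Mapping" "HOL-Computational_Algebra.Polynomial"
begin

datatype gen = GA | GB | GC | GD | GDel | GDelInv

datatype ncword = NW "gen list"

instantiation ncword :: monoid_add
begin
fun plus_ncword :: "ncword \<Rightarrow> ncword \<Rightarrow> ncword" where
  "plus_ncword (NW xs) (NW ys) = NW (xs @ ys)"
definition zero_ncword :: ncword where "zero_ncword = NW []"
instance
proof
  fix a b c :: ncword
  show "a + b + c = a + (b + c)" by (cases a; cases b; cases c) auto
  show "0 + a = a" by (cases a) (auto simp: zero_ncword_def)
  show "a + 0 = a" by (cases a) (auto simp: zero_ncword_def)
qed
end

text \<open>Free (noncommutative) k-algebra: finitely supported functions on words,
  multiplication = convolution along concatenation.\<close>
type_synonym 'k fa = "ncword \<Rightarrow>\<^sub>0 'k"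

definition fconst :: "'k::ring_1 \<Rightarrow> 'k fa" where
  "fconst c = Poly_Mapping.single 0 c"

definition fword :: "gen list \<Rightarrow> 'k::ring_1 fa" where
  "fword xs = Poly_Mapping.single (NW xs) 1"

definition fg :: "gen \<Rightarrow> 'k::ring_1 fa" where
  "fg x = fword [x]"

definition gl2_rels :: "'k::ring_1 fa list" where
  "gl2_rels =
    [ fg GA * fg GC - fg GC * fg GA,
      fg GB * fg GD - fg GD * fg GB,
      fg GA * fg GD - fg GC * fg GB - fg GDel,
      fg GD * fg GA - fg GB * fg GC - fg GDel,
      fg GDel * fg GDelInv - 1,
      fg GDelInv * fg GDel - 1,
      fg GA * fg GDelInv * fg GD - fg GB * fg GDelInv * fg GC - 1,
      fg GD * fg GDelInv * fg GA - fg GC * fg GDelInv * fg GB - 1,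
      fg GB * fg GDelInv * fg GA - fg GA * fg GDelInv * fg GB,
      fg GC * fg GDelInv * fg GD - fg GD * fg GDelInv * fg GC ]"

inductive_set gl2_ideal :: "'k::ring_1 fa set" where
  rel: "r \<in> set gl2_rels \<Longrightarrow> r \<in> gl2_ideal"
| zero: "0 \<in> gl2_ideal"
| add: "x \<in> gl2_ideal \<Longrightarrow> y \<in> gl2_ideal \<Longrightarrow> x + y \<in> gl2_ideal"
| mult: "x \<in> gl2_ideal \<Longrightarrow> u * x * v \<in> gl2_ideal"

definition heq :: "'k::ring_1 fa \<Rightarrow> 'k fa \<Rightarrow> bool" where
  "heq x y \<longleftrightarrow> x - y \<in> gl2_ideal"

text \<open>Coproduct of the generators a,b,c,d as lists of simple tensors (left, right).\<close>
fun gl2_coprod :: "gen \<Rightarrow> (gen \<times> gen) list" where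
  "gl2_coprod GA = [(GA, GA), (GB, GC)]"
| "gl2_coprod GB = [(GA, GB), (GB, GD)]"
| "gl2_coprod GC = [(GC, GA), (GD, GC)]"
| "gl2_coprod GD = [(GC, GB), (GD, GD)]"
| "gl2_coprod GDel = [(GDel, GDel)]"
| "gl2_coprod GDelInv = [(GDelInv, GDelInv)]"

text \<open>Inverse of the antipode S on generators (S(a) = del^-1 d etc. gives
  S^-1(a) = d del^-1, S^-1(b) = - b del^-1, S^-1(c) = - c del^-1, S^-1(d) = a del^-1);
  extended as an algebra anti-homomorphism.\<close>
fun Sinv_gen :: "gen \<Rightarrow> 'k::ring_1 fa" where
  "Sinv_gen GA = fg GD * fg GDelInv"
| "Sinv_gen GB = - (fg GB * fg GDelInv)"
| "Sinv_gen GC = - (fg GC * fg GDelInv)"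
| "Sinv_gen GD = fg GA * fg GDelInv"
| "Sinv_gen GDel = fg GDelInv"
| "Sinv_gen GDelInv = fg GDel"

definition Sinv_word :: "ncword \<Rightarrow> 'k::ring_1 fa" where
  "Sinv_word w = (case w of NW xs \<Rightarrow> foldr (\<lambda>x r. Sinv_gen x * r) (rev xs) 1)"

definition Sinv :: "'k::ring_1 fa \<Rightarrow> 'k fa" where
  "Sinv f = (\<Sum>w\<in>Poly_Mapping.keys f. fconst (Poly_Mapping.lookup f w) * Sinv_word w)"

text \<open>A finite-dimensional left comodule with basis w_0..w_(n-1) is recorded as
  (n, X) where rho(w_j) = sum_i X i j \<otimes> w_i.\<close>
type_synonym 'k comod = "nat \<times> (nat \<Rightarrow> nat \<Rightarrow> 'k fa)"

text \<open>Tensor product (coaction via multiplication): basis v_i \<otimes> w_j indexed by i*n+j.\<close>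
definition ctensor :: "'k::ring_1 comod \<Rightarrow> 'k comod \<Rightarrow> 'k comod" where
  "ctensor V W = (case V of (m, X) \<Rightarrow> case W of (n, Y) \<Rightarrow>
     (m * n, \<lambda>p q. X (p div n) (q div n) * Y (p mod n) (q mod n)))"

text \<open>Right dual W^* (dual basis; evaluation W \<otimes> W^* \<rightarrow> k is a comodule map):
  coefficient matrix S^-1 applied to the transpose.\<close>
definition cdual :: "'k::ring_1 comod \<Rightarrow> 'k comod" where
  "cdual V = (case V of (m, X) \<Rightarrow> (m, \<lambda>i k. Sinv (X k i)))"

definition cR :: "'k::ring_1 comod" where
  "cR = (1, \<lambda>_ _. fg GDel)"

definition cRinv :: "'k::ring_1 comod" where
  "cRinv = (1, \<lambda>_ _. fg GDelInv)"

text \<open>S^n V: basis b^i d^(n-i), i = 0..n (index i).  The coaction of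
  b^j d^(n-j) = Delta(b)^j Delta(d)^(n-j) is expanded over all choices of summands;
  the right tensor factor is a word in b,d, which equals b^i d^(n-i) (as bd = db)
  where i is its number of b's.\<close>
definition SnV_coeff :: "nat \<Rightarrow> nat \<Rightarrow> nat \<Rightarrow> 'k::ring_1 fa" where
  "SnV_coeff n i j =
    (let L = replicate j GB @ replicate (n - j) GD in
     \<Sum>cs\<in>{cs :: bool list. length cs = n}.
       (let terms = map (\<lambda>(x, c). gl2_coprod x ! (if c then 0 else 1)) (zip L cs) in
        if length (filter (\<lambda>y. y = GB) (map snd terms)) = i
        then fword (map fst terms) else 0))"

definition SnV :: "nat \<Rightarrow> 'k::ring_1 comod" where
  "SnV n = (n + 1, SnV_coeff n)"

definition TnV :: "nat \<Rightarrow> 'k::ring_1 comod" where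
  "TnV n = ctensor (cdual (SnV n)) cR"

definition comod_iso :: "'k::ring_1 comod \<Rightarrow> 'k comod \<Rightarrow> bool" where
  "comod_iso V W = (case V of (m, X) \<Rightarrow> case W of (n, Y) \<Rightarrow>
     m = n \<and> (\<exists>P Q :: nat \<Rightarrow> nat \<Rightarrow> 'k.
        (\<forall>i<m. \<forall>j<m. (\<Sum>l<m. P i l * Q l j) = (if i = j then 1 else 0)) \<and>
        (\<forall>i<m. \<forall>j<m. (\<Sum>l<m. Q i l * P l j) = (if i = j then 1 else 0)) \<and>
        (\<forall>i<m. \<forall>j<m. heq (\<Sum>l<m. Y i l * fconst (P l j)) (\<Sum>l<m. fconst (P i l) * X l j))))"

definition alg_closed_type :: "'k::field itself \<Rightarrow> bool" where
  "alg_closed_type _ \<longleftrightarrow> (\<forall>p :: 'k poly. degree p \<ge> 1 \<longrightarrow> (\<exists>x. poly p x = 0))"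

end

theory Submission
  imports Defs
begin

text \<open>
  In the dual basis \<open>\<xi>\<^sub>i\<close> of \<open>T\<^sup>\<bullet>V\<close> and the monomial basis \<open>b\<^sup>jd\<^sup>n\<^sup>-\<^sup>j\<close> of \<open>S\<^sup>nV\<close>, the first
  isomorphism is \<open>\<xi>\<^sub>i \<otimes> b\<^sup>jd\<^sup>n\<^sup>-\<^sup>j \<mapsto> \<xi>\<^sub>i \<otimes> b\<^sup>j\<^sup>+\<^sup>1d\<^sup>n\<^sup>-\<^sup>j - \<xi>\<^sub>i\<^sub>-\<^sub>1 \<otimes> b\<^sup>jd\<^sup>n\<^sup>+\<^sup>1\<^sup>-\<^sup>j\<close> (terms with an
  index out of range omitted), the second its mirror image. Their inverses have entries
  \<open>0, \<plusminus>1\<close>, so neither characteristic zero nor algebraic closure is needed.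

  The coefficient of \<open>b\<^sup>id\<^sup>n\<^sup>-\<^sup>i\<close> in the coaction on \<open>b\<^sup>jd\<^sup>n\<^sup>-\<^sup>j\<close> is the coefficient of \<open>t\<^sup>i\<close>
  in \<open>(a t + b)\<^sup>j (c t + d)\<^sup>n\<^sup>-\<^sup>j\<close>, and dually, via \<open>S\<^sup>-\<^sup>1\<close>, for \<open>T\<^sup>nV\<close>. Because \<open>\<Delta>(b)\<close> and
  \<open>\<Delta>(d)\<close> commute, these factors may be reordered modulo the relations, so the coaction on
  \<open>S\<^sup>n\<^sup>+\<^sup>1V\<close> is obtained from that on \<open>S\<^sup>nV\<close> by splitting off a factor on either side.
  Comparing the two sides of the intertwining identity entrywise then only needs
  \<open>\<delta>\<delta>\<^sup>-\<^sup>1 = 1 = \<delta>\<^sup>-\<^sup>1\<delta>\<close>.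
\<close>

abbreviation gA :: "'k::ring_1 fa" where "gA \<equiv> fg GA"
abbreviation gB :: "'k::ring_1 fa" where "gB \<equiv> fg GB"
abbreviation gC :: "'k::ring_1 fa" where "gC \<equiv> fg GC"
abbreviation gD :: "'k::ring_1 fa" where "gD \<equiv> fg GD"
abbreviation gDel :: "'k::ring_1 fa" where "gDel \<equiv> fg GDel"
abbreviation gDelInv :: "'k::ring_1 fa" where "gDelInv \<equiv> fg GDelInv"

section \<open>Congruence modulo the defining relations\<close>

lemma gl2_ideal_mult_left: "x \<in> gl2_ideal \<Longrightarrow> u * x \<in> gl2_ideal"
  using gl2_ideal.mult[of x u 1] by simp

lemma gl2_ideal_mult_right: "x \<in> gl2_ideal \<Longrightarrow> x * v \<in> gl2_ideal"
  using gl2_ideal.mult[of x 1 v] by simp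

lemma gl2_ideal_uminus: "x \<in> gl2_ideal \<Longrightarrow> - x \<in> gl2_ideal"
  using gl2_ideal.mult[of x "-1" 1] by simp

lemma heq_refl [simp]: "heq x x"
  by (simp add: heq_def gl2_ideal.zero)

lemma heq_sym: "heq x y \<Longrightarrow> heq y x"
  unfolding heq_def using gl2_ideal_uminus by fastforce

lemma heq_trans [trans]: "heq x y \<Longrightarrow> heq y z \<Longrightarrow> heq x z"
  unfolding heq_def using gl2_ideal.add[of "x - y" "y - z"] by simp

lemma heq_eq_trans [trans]: "heq x y \<Longrightarrow> y = z \<Longrightarrow> heq x z"
  by simp

lemma eq_heq_trans [trans]: "x = y \<Longrightarrow> heq y z \<Longrightarrow> heq x z"
  by simp

lemma heq_add: "heq x y \<Longrightarrow> heq x' y' \<Longrightarrow> heq (x + x') (y + y')"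
  unfolding heq_def using gl2_ideal.add[of "x - y" "x' - y'"] by (simp add: algebra_simps)

lemma heq_uminus: "heq x y \<Longrightarrow> heq (- x) (- y)"
  unfolding heq_def using gl2_ideal_uminus[of "x - y"] by (simp add: algebra_simps)

lemma heq_diff: "heq x y \<Longrightarrow> heq x' y' \<Longrightarrow> heq (x - x') (y - y')"
  using heq_add[of x y "- x'" "- y'"] heq_uminus[of x' y'] by simp

lemma heq_mult: "heq x y \<Longrightarrow> heq x' y' \<Longrightarrow> heq (x * x') (y * y')"
proof -
  assume "heq x y" "heq x' y'"
  then have "(x - y) * x' + y * (x' - y') \<in> gl2_ideal"
    unfolding heq_def by (intro gl2_ideal.add gl2_ideal_mult_left gl2_ideal_mult_right)
  then show ?thesis
    unfolding heq_def by (simp add: algebra_simps)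
qed

lemma heq_of_rel: "x - y \<in> set gl2_rels \<Longrightarrow> heq x y"
  by (simp add: heq_def gl2_ideal.rel)

lemma heq_ac_comm: "heq (gA * gC) (gC * gA)"
  by (rule heq_of_rel) (simp add: gl2_rels_def)

lemma heq_bd_comm: "heq (gB * gD) (gD * gB)"
  by (rule heq_of_rel) (simp add: gl2_rels_def)

lemma heq_det_ad: "heq (gA * gD - gC * gB) gDel"
  by (rule heq_of_rel) (simp add: gl2_rels_def)

lemma heq_det_da: "heq (gD * gA - gB * gC) gDel"
  by (rule heq_of_rel) (simp add: gl2_rels_def)

lemma heq_del_delinv: "heq (gDel * gDelInv) 1"
  by (rule heq_of_rel) (simp add: gl2_rels_def)

lemma heq_delinv_del: "heq (gDelInv * gDel) 1"
  by (rule heq_of_rel) (simp add: gl2_rels_def)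

lemma heq_qdet_inv_ad: "heq (gA * gDelInv * gD - gB * gDelInv * gC) 1"
  by (rule heq_of_rel) (simp add: gl2_rels_def)

lemma heq_qdet_inv_da: "heq (gD * gDelInv * gA - gC * gDelInv * gB) 1"
  by (rule heq_of_rel) (simp add: gl2_rels_def)

lemma heq_ba_twisted_comm: "heq (gB * gDelInv * gA) (gA * gDelInv * gB)"
  by (rule heq_of_rel) (simp add: gl2_rels_def)

lemma heq_cd_twisted_comm: "heq (gC * gDelInv * gD) (gD * gDelInv * gC)"
  by (rule heq_of_rel) (simp add: gl2_rels_def)

lemma heq_cancel_del_delinv: "heq (x * (gDel * gDelInv) * y) (x * y)"
  using heq_mult[OF heq_mult[OF heq_refl heq_del_delinv] heq_refl] by simp

lemma heq_cancel_delinv_del: "heq (x * (gDelInv * gDel) * y) (x * y)"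
  using heq_mult[OF heq_mult[OF heq_refl heq_delinv_del] heq_refl] by simp

section \<open>Words, scalars and the inverse antipode\<close>

lemma fword_Nil [simp]: "fword [] = 1"
  by (simp add: fword_def zero_ncword_def[symmetric])

lemma fword_Cons: "fword (x # xs) = fg x * fword xs"
  by (simp add: fword_def fg_def mult_single)

lemma fword_eq_prod_list: "fword xs = prod_list (map fg xs)"
  by (induction xs) (simp_all add: fword_Cons)

lemma fconst_0 [simp]: "fconst 0 = 0"
  by (simp add: fconst_def)

lemma fconst_1 [simp]: "fconst 1 = 1"
  by (simp add: fconst_def)

lemma fconst_diff: "fconst (x - y) = fconst x - fconst y"
  by (simp add: fconst_def single_diff)

lemma fconst_uminus: "fconst (- x) = - fconst x"
  using fconst_diff[of 0 x] by simp

lemma Sinv_eq_sum_superset: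
  "finite S \<Longrightarrow> Poly_Mapping.keys f \<subseteq> S \<Longrightarrow>
   Sinv f = (\<Sum>w\<in>S. fconst (Poly_Mapping.lookup f w) * Sinv_word w)"
  unfolding Sinv_def by (rule sum.mono_neutral_left) (auto simp: in_keys_iff)

lemma Sinv_add: "Sinv (f + g) = Sinv f + Sinv g"
proof -
  let ?S = "Poly_Mapping.keys f \<union> Poly_Mapping.keys g"
  have "Poly_Mapping.keys (f + g) \<subseteq> ?S"
    by (rule keys_add)
  then show ?thesis
    using Sinv_eq_sum_superset[of ?S f] Sinv_eq_sum_superset[of ?S g]
      Sinv_eq_sum_superset[of ?S "f + g"]
    by (simp add: lookup_add fconst_def single_add distrib_right sum.distrib)
qed

lemma Sinv_0 [simp]: "Sinv 0 = 0"
  by (simp add: Sinv_def)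

lemma Sinv_sum: "Sinv (sum f S) = (\<Sum>x\<in>S. Sinv (f x))"
  by (induction S rule: infinite_finite_induct) (simp_all add: Sinv_add)

lemma Sinv_fword: "Sinv (fword w) = prod_list (map Sinv_gen (rev w))"
proof -
  have foldr_eq: "foldr (\<lambda>x r. g x * r) xs 1 = prod_list (map g xs)" for g :: "gen \<Rightarrow> 'a fa" and xs
    by (induction xs) auto
  have "Sinv (fword w :: 'a::ring_1 fa) = fconst 1 * Sinv_word (NW w)"
    unfolding Sinv_def fword_def by simp
  then show ?thesis
    by (simp add: Sinv_word_def foldr_eq)
qed

section \<open>Coefficients of products of binomials\<close>

text \<open>\<open>prod_coeff [(x\<^sub>1, y\<^sub>1), \<dots>, (x\<^sub>n, y\<^sub>n)] i\<close> is the coefficient of \<open>t\<^sup>i\<close> in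
  \<open>(x\<^sub>1 t + y\<^sub>1) \<cdots> (x\<^sub>n t + y\<^sub>n)\<close> for a central indeterminate \<open>t\<close>.\<close>

fun prod_coeff :: "('a::ring_1 \<times> 'a) list \<Rightarrow> nat \<Rightarrow> 'a" where
  "prod_coeff [] i = (if i = 0 then 1 else 0)"
| "prod_coeff ((x, y) # L) i = (if i = 0 then 0 else x * prod_coeff L (i - 1)) + y * prod_coeff L i"

definition prod_coeff_prev :: "('a::ring_1 \<times> 'a) list \<Rightarrow> nat \<Rightarrow> 'a" where
  "prod_coeff_prev L i = (if i = 0 then 0 else prod_coeff L (i - 1))"

lemma prod_coeff_Cons: "prod_coeff ((x, y) # L) i = x * prod_coeff_prev L i + y * prod_coeff L i"
  by (simp add: prod_coeff_prev_def)

declare prod_coeff.simps(2) [simp del]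

lemma prod_coeff_eq_0: "length L < i \<Longrightarrow> prod_coeff L i = 0"
  by (induction L arbitrary: i) (auto simp: prod_coeff_Cons prod_coeff_prev_def)

lemma prod_coeff_snoc:
  "prod_coeff (L @ [(x, y)]) i = prod_coeff_prev L i * x + prod_coeff L i * y"
proof (induction L arbitrary: i)
  case Nil
  then show ?case
    by (cases i) (auto simp: prod_coeff_Cons prod_coeff_prev_def)
next
  case (Cons p L)
  then show ?case
    by (cases p; cases i) (auto simp: prod_coeff_Cons prod_coeff_prev_def algebra_simps)
qed

definition pick :: "('a \<times> 'a) \<times> bool \<Rightarrow> 'a" where
  "pick pc = (if snd pc then fst (fst pc) else snd (fst pc))"

lemma sum_bool_lists_Suc:
  "(\<Sum>cs | length cs = Suc n. F cs) =
   (\<Sum>cs | length cs = n. F (True # cs)) + (\<Sum>cs | length cs = n. F (False # cs))"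
proof -
  have split: "{cs :: bool list. length cs = Suc n} =
    Cons True ` {cs. length cs = n} \<union> Cons False ` {cs. length cs = n}"
    by (auto simp: length_Suc_conv image_iff)
  have "finite {cs :: bool list. length cs = n}"
    using finite_lists_length_eq[of "UNIV :: bool set" n] by simp
  then show ?thesis
    unfolding split by (subst sum.union_disjoint) (auto simp: sum.reindex)
qed

text \<open>Expanding the product term by term: a choice list \<open>cs\<close> picks \<open>x\<^sub>k\<close> or \<open>y\<^sub>k\<close>
  from each factor, and contributes to \<open>t\<^sup>i\<close> iff it picks exactly \<open>i\<close> of the \<open>x\<^sub>k\<close>.\<close>

lemma sum_choices_eq_prod_coeff:
  "(\<Sum>cs | length cs = length L.
      if length (filter (\<lambda>c. c) cs) = i then prod_list (map pick (zip L cs)) else 0)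
   = prod_coeff L i"
proof (induction L arbitrary: i)
  case Nil
  then show ?case by simp
next
  case (Cons p L)
  obtain x y where p: "p = (x, y)" by (cases p)
  have "(\<Sum>cs | length cs = length L.
      if length (filter (\<lambda>c. c) (True # cs)) = i
      then prod_list (map pick (zip (p # L) (True # cs))) else 0)
    = (\<Sum>cs | length cs = length L. x * (if i = 0 then 0 else
        if length (filter (\<lambda>c. c) cs) = i - 1 then prod_list (map pick (zip L cs)) else 0))"
    by (rule sum.cong) (auto simp: p pick_def)
  also have "\<dots> = x * prod_coeff_prev L i"
    by (simp add: sum_distrib_left[symmetric] Cons prod_coeff_prev_def)
  finally have picked: "(\<Sum>cs | length cs = length L.
      if length (filter (\<lambda>c. c) (True # cs)) = i
      then prod_list (map pick (zip (p # L) (True # cs))) else 0) = x * prod_coeff_prev L i" .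
  have "(\<Sum>cs | length cs = length L.
      if length (filter (\<lambda>c. c) (False # cs)) = i
      then prod_list (map pick (zip (p # L) (False # cs))) else 0)
    = (\<Sum>cs | length cs = length L. y * (if length (filter (\<lambda>c. c) cs) = i
        then prod_list (map pick (zip L cs)) else 0))"
    by (rule sum.cong) (auto simp: p pick_def)
  also have "\<dots> = y * prod_coeff L i"
    by (simp add: sum_distrib_left[symmetric] Cons)
  finally have skipped: "(\<Sum>cs | length cs = length L.
      if length (filter (\<lambda>c. c) (False # cs)) = i
      then prod_list (map pick (zip (p # L) (False # cs))) else 0) = y * prod_coeff L i" .
  show ?case
    unfolding length_Cons sum_bool_lists_Suc picked skipped by (simp add: p prod_coeff_Cons)
qed

lemma sum_choices_rev_eq_prod_coeff_rev:
  "(\<Sum>cs | length cs = length L.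
      if length (filter (\<lambda>c. c) cs) = i then prod_list (rev (map pick (zip L cs))) else 0)
   = prod_coeff (rev L) i"
proof -
  have "prod_coeff (rev L) i = (\<Sum>cs | length cs = length L.
      if length (filter (\<lambda>c. c) cs) = i then prod_list (map pick (zip (rev L) cs)) else 0)"
    using sum_choices_eq_prod_coeff[where L = "rev L" and i = i] by simp
  also have "\<dots> = (\<Sum>cs | length cs = length L. if length (filter (\<lambda>c. c) (rev cs)) = i
      then prod_list (map pick (zip (rev L) (rev cs))) else 0)"
    by (rule sum.reindex_bij_witness[of _ rev rev]) auto
  also have "\<dots> = (\<Sum>cs | length cs = length L.
      if length (filter (\<lambda>c. c) cs) = i then prod_list (rev (map pick (zip L cs))) else 0)"
    by (rule sum.cong) (simp_all add: zip_rev rev_map rev_filter[symmetric])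
  finally show ?thesis ..
qed

section \<open>Reordering binomial factors modulo the relations\<close>

definition coeff_equiv :: "('k::ring_1 fa \<times> 'k fa) list \<Rightarrow> ('k fa \<times> 'k fa) list \<Rightarrow> bool" where
  "coeff_equiv L L' \<longleftrightarrow> (\<forall>i. heq (prod_coeff L i) (prod_coeff L' i))"

lemma coeff_equivD: "coeff_equiv L L' \<Longrightarrow> heq (prod_coeff L i) (prod_coeff L' i)"
  by (simp add: coeff_equiv_def)

lemma coeff_equiv_prev: "coeff_equiv L L' \<Longrightarrow> heq (prod_coeff_prev L i) (prod_coeff_prev L' i)"
  by (simp add: coeff_equiv_def prod_coeff_prev_def)

lemma coeff_equiv_refl [simp]: "coeff_equiv L L"
  by (simp add: coeff_equiv_def)

lemma coeff_equiv_sym: "coeff_equiv L L' \<Longrightarrow> coeff_equiv L' L"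
  by (simp add: coeff_equiv_def heq_sym)

lemma coeff_equiv_trans: "coeff_equiv L L' \<Longrightarrow> coeff_equiv L' L'' \<Longrightarrow> coeff_equiv L L''"
  unfolding coeff_equiv_def by (blast intro: heq_trans)

lemma coeff_equiv_Cons: "coeff_equiv L L' \<Longrightarrow> coeff_equiv (p # L) (p # L')"
  by (cases p) (auto simp: coeff_equiv_def prod_coeff_Cons
      intro!: heq_add heq_mult coeff_equiv_prev coeff_equivD)

lemma coeff_equiv_snoc: "coeff_equiv L L' \<Longrightarrow> coeff_equiv (L @ [p]) (L' @ [p])"
  by (cases p) (auto simp: coeff_equiv_def prod_coeff_snoc
      intro!: heq_add heq_mult coeff_equiv_prev coeff_equivD)

lemma coeff_equiv_append_left: "coeff_equiv L L' \<Longrightarrow> coeff_equiv (P @ L) (P @ L')"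
  by (induction P) (auto intro: coeff_equiv_Cons)

lemma coeff_equiv_append_right: "coeff_equiv L L' \<Longrightarrow> coeff_equiv (L @ S) (L' @ S)"
proof (induction S rule: rev_induct)
  case (snoc p S)
  then show ?case
    using coeff_equiv_snoc[of "L @ S" "L' @ S" p] by simp
qed simp

lemma coeff_equiv_move_past_replicate:
  assumes "coeff_equiv [p, q] [q, p]"
  shows "coeff_equiv (P @ p # replicate n q @ S) (P @ replicate n q @ p # S)"
proof (induction n arbitrary: P)
  case (Suc n)
  have "coeff_equiv (P @ p # q # replicate n q @ S) (P @ q # p # replicate n q @ S)"
    using coeff_equiv_append_left[OF coeff_equiv_append_right[OF assms]] by simp
  moreover have "coeff_equiv ((P @ [q]) @ p # replicate n q @ S) ((P @ [q]) @ replicate n q @ p # S)"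
    by (rule Suc)
  ultimately show ?case
    by (auto intro: coeff_equiv_trans)
qed simp

lemma coeff_equiv_move_front:
  assumes "coeff_equiv [p, q] [q, p]"
  shows "coeff_equiv (replicate j p @ replicate (Suc m) q) (q # replicate j p @ replicate m q)"
  using coeff_equiv_sym[OF coeff_equiv_move_past_replicate[OF coeff_equiv_sym[OF assms],
        of "[]" j "replicate m q"]]
  by (simp add: replicate_append_same)

lemma coeff_equiv_move_back:
  assumes "coeff_equiv [p, q] [q, p]"
  shows "coeff_equiv (replicate (Suc j) p @ replicate m q) (replicate j p @ replicate m q @ [p])"
  using coeff_equiv_move_past_replicate[OF assms, of "replicate j p" m "[]"]
  by (simp add: replicate_append_same[symmetric])

text \<open>The factors \<open>a t + b\<close> and \<open>c t + d\<close> record \<open>\<Delta>(b)\<close> and \<open>\<Delta>(d)\<close>, the power of \<open>t\<close>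
  counting the right tensor factors equal to \<open>b\<close>; the primed versions are their images under
  \<open>S\<^sup>-\<^sup>1 \<otimes> id\<close>.\<close>

abbreviation coact_b :: "'k::ring_1 fa \<times> 'k fa" where "coact_b \<equiv> (gA, gB)"
abbreviation coact_d :: "'k::ring_1 fa \<times> 'k fa" where "coact_d \<equiv> (gC, gD)"
abbreviation coact_b' :: "'k::ring_1 fa \<times> 'k fa" where "coact_b' \<equiv> (Sinv_gen GA, Sinv_gen GB)"
abbreviation coact_d' :: "'k::ring_1 fa \<times> 'k fa" where "coact_d' \<equiv> (Sinv_gen GC, Sinv_gen GD)"

lemma coeff_equiv_coact_bd: "coeff_equiv [coact_b, coact_d] [coact_d, coact_b]"
proof -
  have ad: "heq (gA * gD + gB * gC) (gC * gB + gD * gA)"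
    using heq_add[OF heq_trans[OF heq_det_ad heq_sym[OF heq_det_da]] heq_refl[of "gC * gB + gB * gC"]]
    by (simp add: algebra_simps)
  have "heq (prod_coeff [coact_b, coact_d] i) (prod_coeff [coact_d, coact_b] i)" for i
    using heq_bd_comm heq_ac_comm ad
    by (cases "i = 0 \<or> i = 1 \<or> i = 2")
      (auto simp: prod_coeff_Cons prod_coeff_prev_def)
  then show ?thesis
    unfolding coeff_equiv_def ..
qed

lemma coeff_equiv_coact_bd': "coeff_equiv [coact_b', coact_d'] [coact_d', coact_b']"
proof -
  have "heq (gD * gDelInv * gA - gC * gDelInv * gB) (gA * gDelInv * gD - gB * gDelInv * gC)"
    by (rule heq_trans[OF heq_qdet_inv_da heq_sym[OF heq_qdet_inv_ad]])
  from heq_add[OF this heq_refl[of "gC * gDelInv * gB + gB * gDelInv * gC"]]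
  have ad: "heq (gD * gDelInv * gA + gB * gDelInv * gC) (gA * gDelInv * gD + gC * gDelInv * gB)"
    by (simp add: algebra_simps)
  have "heq (prod_coeff [coact_b', coact_d'] i) (prod_coeff [coact_d', coact_b'] i)" for i
    using heq_uminus[OF heq_mult[OF heq_ba_twisted_comm heq_refl[of gDelInv]]]
      heq_uminus[OF heq_mult[OF heq_sym[OF heq_cd_twisted_comm] heq_refl[of gDelInv]]]
      heq_mult[OF ad heq_refl[of gDelInv]]
    by (cases "i = 0 \<or> i = 1 \<or> i = 2")
      (auto simp: prod_coeff_Cons prod_coeff_prev_def algebra_simps)
  then show ?thesis
    unfolding coeff_equiv_def ..
qed

section \<open>The coaction of \<open>S\<^sup>nV\<close> and of its dual\<close>

definition chosen_terms :: "gen list \<Rightarrow> bool list \<Rightarrow> (gen \<times> gen) list" where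
  "chosen_terms L cs = map (\<lambda>(x, c). gl2_coprod x ! (if c then 0 else 1)) (zip L cs)"

definition left_factors :: "(gen \<Rightarrow> 'a) \<Rightarrow> gen \<Rightarrow> 'a \<times> 'a" where
  "left_factors g x = (g (fst (gl2_coprod x ! 0)), g (fst (gl2_coprod x ! 1)))"

lemma length_filter_chosen_terms:
  "length cs = length L \<Longrightarrow> set L \<subseteq> {GB, GD} \<Longrightarrow>
   length (filter (\<lambda>y. y = GB) (map snd (chosen_terms L cs))) = length (filter (\<lambda>c. c) cs)"
  by (induction cs L rule: list_induct2) (auto simp: chosen_terms_def)

lemma map_fst_chosen_terms:
  "length cs = length L \<Longrightarrow>
   map (g \<circ> fst) (chosen_terms L cs) = map pick (zip (map (left_factors g) L) cs)"
  by (induction cs L rule: list_induct2) (auto simp: chosen_terms_def left_factors_def pick_def)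

lemma SnV_coeff_eq_sum_choices:
  assumes "j \<le> n"
  shows "SnV_coeff n i j = (\<Sum>cs | length cs = n. if length (filter (\<lambda>c. c) cs) = i
           then fword (map fst (chosen_terms (replicate j GB @ replicate (n - j) GD) cs)) else 0)"
  unfolding SnV_coeff_def Let_def chosen_terms_def[symmetric]
  by (rule sum.cong, simp, subst length_filter_chosen_terms) (use assms in auto)

definition SnV_factors :: "nat \<Rightarrow> nat \<Rightarrow> ('k::ring_1 fa \<times> 'k fa) list" where
  "SnV_factors n j = replicate j coact_b @ replicate (n - j) coact_d"

text \<open>The factors are reversed because \<open>S\<^sup>-\<^sup>1\<close> is an anti-homomorphism.\<close>

definition SnV_factors' :: "nat \<Rightarrow> nat \<Rightarrow> ('k::ring_1 fa \<times> 'k fa) list" where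
  "SnV_factors' n j = replicate (n - j) coact_d' @ replicate j coact_b'"

lemma SnV_coeff_eq_prod_coeff:
  assumes "j \<le> n"
  shows "SnV_coeff n i j = prod_coeff (SnV_factors n j) i"
proof -
  let ?L = "replicate j GB @ replicate (n - j) GD"
  have "SnV_coeff n i j = (\<Sum>cs | length cs = length ?L. if length (filter (\<lambda>c. c) cs) = i
      then prod_list (map pick (zip (map (left_factors fg) ?L) cs)) else 0)"
    using assms
    by (auto simp: SnV_coeff_eq_sum_choices fword_eq_prod_list map_fst_chosen_terms
        intro!: sum.cong)
  also have "\<dots> = prod_coeff (map (left_factors fg) ?L) i"
    using sum_choices_eq_prod_coeff[where L = "map (left_factors fg) ?L"] by simp
  finally show ?thesis
    by (simp add: left_factors_def SnV_factors_def)
qed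

lemma Sinv_SnV_coeff_eq_prod_coeff:
  assumes "j \<le> n"
  shows "Sinv (SnV_coeff n i j) = prod_coeff (SnV_factors' n j) i"
proof -
  let ?L = "replicate j GB @ replicate (n - j) GD"
  have "Sinv (SnV_coeff n i j) = (\<Sum>cs | length cs = length ?L. if length (filter (\<lambda>c. c) cs) = i
      then prod_list (rev (map pick (zip (map (left_factors Sinv_gen) ?L) cs))) else 0)"
    using assms
    by (auto simp: SnV_coeff_eq_sum_choices Sinv_sum Sinv_fword rev_map[symmetric]
        map_fst_chosen_terms intro!: sum.cong)
  also have "\<dots> = prod_coeff (rev (map (left_factors Sinv_gen) ?L)) i"
    using sum_choices_rev_eq_prod_coeff_rev[where L = "map (left_factors Sinv_gen) ?L"] by simp
  finally show ?thesis
    by (simp add: left_factors_def SnV_factors'_def)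
qed

lemma SnV_coeff_Suc_b_left:
  assumes "j \<le> n"
  shows "SnV_coeff (Suc n) l (Suc j)
     = gA * prod_coeff_prev (SnV_factors n j) l + gB * prod_coeff (SnV_factors n j) l"
proof -
  have factors: "SnV_factors (Suc n) (Suc j) = coact_b # SnV_factors n j"
    by (simp add: SnV_factors_def)
  show ?thesis
    using assms by (simp only: factors SnV_coeff_eq_prod_coeff Suc_le_mono prod_coeff_Cons)
qed

lemma SnV_coeff_Suc_d_right:
  assumes "j \<le> n"
  shows "SnV_coeff (Suc n) l j
     = prod_coeff_prev (SnV_factors n j) l * gC + prod_coeff (SnV_factors n j) l * gD"
proof -
  have factors: "SnV_factors (Suc n) j = SnV_factors n j @ [coact_d]"
    using assms by (simp add: SnV_factors_def Suc_diff_le replicate_append_same)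
  show ?thesis
    using assms by (simp only: factors SnV_coeff_eq_prod_coeff le_SucI prod_coeff_snoc)
qed

lemma SnV_coeff_Suc_d_left:
  assumes "j \<le> n"
  shows "heq (SnV_coeff (Suc n) l j)
     (gC * prod_coeff_prev (SnV_factors n j) l + gD * prod_coeff (SnV_factors n j) l)"
proof -
  have "coeff_equiv (SnV_factors (Suc n) j) (coact_d # SnV_factors n j)"
    using coeff_equiv_move_front[OF coeff_equiv_coact_bd, of j "n - j"] assms
    by (simp add: SnV_factors_def Suc_diff_le)
  from coeff_equivD[OF this] show ?thesis
    using assms by (simp only: SnV_coeff_eq_prod_coeff le_SucI prod_coeff_Cons)
qed

lemma SnV_coeff_Suc_b_right:
  assumes "j \<le> n"
  shows "heq (SnV_coeff (Suc n) l (Suc j))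
     (prod_coeff_prev (SnV_factors n j) l * gA + prod_coeff (SnV_factors n j) l * gB)"
proof -
  have "coeff_equiv (SnV_factors (Suc n) (Suc j)) (SnV_factors n j @ [coact_b])"
    using coeff_equiv_move_back[OF coeff_equiv_coact_bd, of j "n - j"]
    by (simp add: SnV_factors_def)
  from coeff_equivD[OF this] show ?thesis
    using assms by (simp only: SnV_coeff_eq_prod_coeff Suc_le_mono prod_coeff_snoc)
qed

lemma Sinv_SnV_coeff_Suc_d_left:
  assumes "k \<le> n"
  shows "Sinv (SnV_coeff (Suc n) i k) = Sinv_gen GC * prod_coeff_prev (SnV_factors' n k) i
     + Sinv_gen GD * prod_coeff (SnV_factors' n k) i"
proof -
  have factors: "SnV_factors' (Suc n) k = coact_d' # SnV_factors' n k"
    using assms by (simp add: SnV_factors'_def Suc_diff_le)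
  show ?thesis
    using assms by (simp only: factors Sinv_SnV_coeff_eq_prod_coeff le_SucI prod_coeff_Cons)
qed

lemma Sinv_SnV_coeff_Suc_b_right:
  assumes "k \<le> n"
  shows "Sinv (SnV_coeff (Suc n) i (Suc k)) = prod_coeff_prev (SnV_factors' n k) i * Sinv_gen GA
     + prod_coeff (SnV_factors' n k) i * Sinv_gen GB"
proof -
  have factors: "SnV_factors' (Suc n) (Suc k) = SnV_factors' n k @ [coact_b']"
    by (simp add: SnV_factors'_def replicate_append_same)
  show ?thesis
    using assms by (simp only: factors Sinv_SnV_coeff_eq_prod_coeff Suc_le_mono prod_coeff_snoc)
qed

lemma Sinv_SnV_coeff_Suc_d_right:
  assumes "k \<le> n"
  shows "heq (Sinv (SnV_coeff (Suc n) i k)) (prod_coeff_prev (SnV_factors' n k) i * Sinv_gen GC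
     + prod_coeff (SnV_factors' n k) i * Sinv_gen GD)"
proof -
  have "coeff_equiv (SnV_factors' (Suc n) k) (SnV_factors' n k @ [coact_d'])"
    using coeff_equiv_move_back[OF coeff_equiv_sym[OF coeff_equiv_coact_bd'], of "n - k" k] assms
    by (simp add: SnV_factors'_def Suc_diff_le)
  from coeff_equivD[OF this] show ?thesis
    using assms by (simp only: Sinv_SnV_coeff_eq_prod_coeff le_SucI prod_coeff_snoc)
qed

lemma Sinv_SnV_coeff_Suc_b_left:
  assumes "k \<le> n"
  shows "heq (Sinv (SnV_coeff (Suc n) i (Suc k))) (Sinv_gen GA * prod_coeff_prev (SnV_factors' n k) i
     + Sinv_gen GB * prod_coeff (SnV_factors' n k) i)"
proof -
  have "coeff_equiv (SnV_factors' (Suc n) (Suc k)) (coact_b' # SnV_factors' n k)"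
    using coeff_equiv_move_front[OF coeff_equiv_sym[OF coeff_equiv_coact_bd'], of "n - k" k]
    by (simp add: SnV_factors'_def)
  from coeff_equivD[OF this] show ?thesis
    using assms by (simp only: Sinv_SnV_coeff_eq_prod_coeff Suc_le_mono prod_coeff_Cons)
qed

lemma SnV_coeff_prev:
  "j \<le> n \<Longrightarrow> (if l = 0 then 0 else SnV_coeff n (l - 1) j) = prod_coeff_prev (SnV_factors n j) l"
  by (simp add: SnV_coeff_eq_prod_coeff prod_coeff_prev_def)

lemma Sinv_SnV_coeff_prev:
  "k \<le> n \<Longrightarrow> (if i = 0 then 0 else Sinv (SnV_coeff n (i - 1) k)) = prod_coeff_prev (SnV_factors' n k) i"
  by (simp add: Sinv_SnV_coeff_eq_prod_coeff prod_coeff_prev_def)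

lemma SnV_coeff_eq_0: "j \<le> n \<Longrightarrow> n < i \<Longrightarrow> SnV_coeff n i j = 0"
  by (simp add: SnV_coeff_eq_prod_coeff prod_coeff_eq_0 SnV_factors_def)

lemma Sinv_SnV_coeff_eq_0: "k \<le> n \<Longrightarrow> n < i \<Longrightarrow> Sinv (SnV_coeff n i k) = 0"
  by (simp add: Sinv_SnV_coeff_eq_prod_coeff prod_coeff_eq_0 SnV_factors'_def)

section \<open>Block matrices and the shift matrix\<close>

lemma sum_lessThan_mult:
  fixes f :: "nat \<Rightarrow> 'a::comm_monoid_add"
  shows "(\<Sum>r<a * b. f r) = (\<Sum>x<a. \<Sum>y<b. f (x * b + y))"
proof -
  have shift: "(\<Sum>r\<in>{k..<k + b}. f r) = (\<Sum>y<b. f (k + y))" for k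
    using sum.shift_bounds_nat_ivl[of f 0 k b] by (simp add: lessThan_atLeast0 add.commute)
  have "(\<Sum>r<a * b. f r) = (\<Sum>x<a. \<Sum>r\<in>{x * b..<x * b + b}. f r)"
    by (rule sum.nat_group[symmetric])
  then show ?thesis
    by (simp only: shift)
qed

lemma sum_block_index:
  fixes f :: "nat \<Rightarrow> nat \<Rightarrow> 'a::comm_monoid_add"
  shows "(\<Sum>r<a * b. f (r div b) (r mod b)) = (\<Sum>x<a. \<Sum>y<b. f x y)"
  unfolding sum_lessThan_mult by (intro sum.cong refl) simp

text \<open>Row index \<open>x * m + y\<close> stands for \<open>(x, y)\<close> and column index \<open>x' * m' + y'\<close> for
  \<open>(x', y')\<close>, as in \<open>ctensor\<close>.\<close>

definition block_mat :: "nat \<Rightarrow> nat \<Rightarrow> (nat \<Rightarrow> nat \<Rightarrow> nat \<Rightarrow> nat \<Rightarrow> 'a) \<Rightarrow> nat \<Rightarrow> nat \<Rightarrow> 'a" where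
  "block_mat m m' A r c = A (r div m) (r mod m) (c div m') (c mod m')"

lemma sum_block_mat_mult:
  fixes A B :: "nat \<Rightarrow> nat \<Rightarrow> nat \<Rightarrow> nat \<Rightarrow> 'a::semiring_0"
  shows "(\<Sum>r<a * b. block_mat m b A q r * block_mat b m' B r q')
   = (\<Sum>x<a. \<Sum>y<b. A (q div m) (q mod m) x y * B x y (q' div m') (q' mod m'))"
  unfolding block_mat_def by (rule sum_block_index)

lemma div_le_of_less_mult:
  fixes q :: nat
  shows "q < Suc a * b \<Longrightarrow> q div b \<le> a"
  using less_mult_imp_div_less[of q "Suc a" b] by simp

lemma block_index_eq_iff:
  fixes q q' m :: nat
  shows "q div m = q' div m \<and> q mod m = q' mod m \<longleftrightarrow> q = q'"
  by (metis div_mod_decomp)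

definition shift_mat :: "nat \<Rightarrow> nat \<Rightarrow> nat \<Rightarrow> nat \<Rightarrow> 'a::ring_1" where
  "shift_mat k l i j = (if k = i \<and> l = Suc j then 1 else 0) - (if Suc k = i \<and> l = j then 1 else 0)"

text \<open>The inverse of \<open>shift_mat\<close>: both preserve the weight \<open>i + l = k + j + 1\<close>, and on
  each weight space the bidiagonal system is solved by partial sums.\<close>

definition shift_mat_inv :: "nat \<Rightarrow> nat \<Rightarrow> nat \<Rightarrow> nat \<Rightarrow> 'a::ring_1" where
  "shift_mat_inv i j k l =
     (if i + l = Suc (k + j) then (if l \<le> k then (if l \<le> j then -1 else 0) else (if j < l then 1 else 0)) else 0)"

lemma fconst_shift_mat: "fconst (shift_mat k l i j) = shift_mat k l i j"
  by (simp add: shift_mat_def fconst_diff)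

lemma sum_sum_delta:
  fixes G :: "nat \<Rightarrow> nat \<Rightarrow> 'a::comm_monoid_add"
  shows "(\<Sum>x<a. \<Sum>y<b. if x = x0 \<and> y = y0 then G x y else 0) = (if x0 < a \<and> y0 < b then G x0 y0 else 0)"
proof -
  have "(\<Sum>x<a. \<Sum>y<b. if x = x0 \<and> y = y0 then G x y else 0)
      = (\<Sum>x<a. if x = x0 then (if y0 < b then G x0 y0 else 0) else 0)"
    by (rule sum.cong) (auto simp: sum.delta sum.delta')
  then show ?thesis
    by (simp add: sum.delta sum.delta')
qed

lemma sum_mult_shift_mat:
  fixes G :: "nat \<Rightarrow> nat \<Rightarrow> 'a::ring_1"
  shows "(\<Sum>x<a. \<Sum>y<b. G x y * shift_mat x y i j)
    = (if i < a \<and> Suc j < b then G i (Suc j) else 0)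
      - (if 0 < i \<and> i \<le> a \<and> j < b then G (i - 1) j else 0)"
proof -
  have "(\<Sum>x<a. \<Sum>y<b. G x y * shift_mat x y i j)
      = (\<Sum>x<a. \<Sum>y<b. if x = i \<and> y = Suc j then G x y else 0)
        - (\<Sum>x<a. \<Sum>y<b. if Suc x = i \<and> y = j then G x y else 0)"
    by (simp add: shift_mat_def right_diff_distrib sum_subtractf if_distrib[of "times (G _ _)"]
        cong: if_cong)
  then show ?thesis
    by (cases i) (auto simp: sum_sum_delta)
qed

lemma sum_shift_mat_mult:
  fixes G :: "nat \<Rightarrow> nat \<Rightarrow> 'a::ring_1"
  shows "(\<Sum>x<a. \<Sum>y<b. shift_mat k l x y * G x y)
    = (if k < a \<and> 0 < l \<and> l \<le> b then G k (l - 1) else 0)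
      - (if Suc k < a \<and> l < b then G (Suc k) l else 0)"
proof -
  have "(\<Sum>x<a. \<Sum>y<b. shift_mat k l x y * G x y)
      = (\<Sum>x<a. \<Sum>y<b. if x = k \<and> Suc y = l then G x y else 0)
        - (\<Sum>x<a. \<Sum>y<b. if x = Suc k \<and> y = l then G x y else 0)"
    by (simp add: shift_mat_def left_diff_distrib sum_subtractf if_distrib[of "\<lambda>s. s * G _ _"]
        eq_commute cong: if_cong)
  then show ?thesis
    by (cases l) (auto simp: sum_sum_delta)
qed

lemma shift_mat_mult_inv:
  assumes "k \<le> n" "l \<le> Suc n" "k' \<le> n" "l' \<le> Suc n"
  shows "(\<Sum>x<Suc (Suc n). \<Sum>y<Suc n. shift_mat k l x y * shift_mat_inv x y k' l')
    = (if k = k' \<and> l = l' then 1 else (0::'a::ring_1))"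
  unfolding sum_shift_mat_mult using assms by (auto simp: shift_mat_inv_def)

lemma shift_mat_inv_mult:
  assumes "i \<le> Suc n" "j \<le> n" "i' \<le> Suc n" "j' \<le> n"
  shows "(\<Sum>x<Suc n. \<Sum>y<Suc (Suc n). shift_mat_inv i j x y * shift_mat x y i' j')
    = (if i = i' \<and> j = j' then 1 else (0::'a::ring_1))"
  unfolding sum_mult_shift_mat using assms by (auto simp: shift_mat_inv_def)

section \<open>The two isomorphisms\<close>

lemma comod_isoI:
  fixes P Q :: "nat \<Rightarrow> nat \<Rightarrow> 'k::ring_1"
  assumes "\<And>i j. i < m \<Longrightarrow> j < m \<Longrightarrow> (\<Sum>l<m. P i l * Q l j) = (if i = j then 1 else 0)"
    and "\<And>i j. i < m \<Longrightarrow> j < m \<Longrightarrow> (\<Sum>l<m. Q i l * P l j) = (if i = j then 1 else 0)"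
    and "\<And>i j. i < m \<Longrightarrow> j < m \<Longrightarrow>
           heq (\<Sum>l<m. Y i l * fconst (P l j)) (\<Sum>l<m. fconst (P i l) * X l j)"
  shows "comod_iso (m, X) (m, Y)"
  using assms unfolding comod_iso_def by blast

lemma TnV_eq: "TnV n = (Suc n, \<lambda>p q. Sinv (SnV_coeff n q p) * gDel)"
  by (simp add: TnV_def ctensor_def cdual_def SnV_def cR_def)

lemma ctensor_TnV_SnV:
  "ctensor (TnV (Suc n)) (SnV n) = (Suc (Suc n) * Suc n, \<lambda>p q.
     Sinv (SnV_coeff (Suc n) (q div Suc n) (p div Suc n)) * gDel * SnV_coeff n (p mod Suc n) (q mod Suc n))"
  by (simp add: TnV_eq ctensor_def SnV_def)

lemma ctensor_TnV_cRinv_SnV: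
  "ctensor (ctensor (TnV n) cRinv) (SnV (Suc n)) = (Suc (Suc n) * Suc n, \<lambda>p q.
     Sinv (SnV_coeff n (q div Suc (Suc n)) (p div Suc (Suc n))) * gDel * gDelInv
     * SnV_coeff (Suc n) (p mod Suc (Suc n)) (q mod Suc (Suc n)))"
  by (simp add: TnV_eq ctensor_def SnV_def cRinv_def)

lemma ctensor_SnV_TnV:
  "ctensor (SnV n) (TnV (Suc n)) = (Suc n * Suc (Suc n), \<lambda>p q.
     SnV_coeff n (p div Suc (Suc n)) (q div Suc (Suc n))
     * (Sinv (SnV_coeff (Suc n) (q mod Suc (Suc n)) (p mod Suc (Suc n))) * gDel))"
  by (simp add: TnV_eq ctensor_def SnV_def)

lemma ctensor_SnV_cRinv_TnV:
  "ctensor (ctensor (SnV (Suc n)) cRinv) (TnV n) = (Suc n * Suc (Suc n), \<lambda>p q.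
     SnV_coeff (Suc n) (p div Suc n) (q div Suc n) * gDelInv
     * (Sinv (SnV_coeff n (q mod Suc n) (p mod Suc n)) * gDel))"
  by (simp add: TnV_eq ctensor_def SnV_def cRinv_def)

definition iso_TS :: "nat \<Rightarrow> nat \<Rightarrow> nat \<Rightarrow> 'a::ring_1" where
  "iso_TS n = block_mat (Suc (Suc n)) (Suc n) shift_mat"

definition iso_TS_inv :: "nat \<Rightarrow> nat \<Rightarrow> nat \<Rightarrow> 'a::ring_1" where
  "iso_TS_inv n = block_mat (Suc n) (Suc (Suc n)) shift_mat_inv"

definition iso_ST :: "nat \<Rightarrow> nat \<Rightarrow> nat \<Rightarrow> 'a::ring_1" where
  "iso_ST n = block_mat (Suc n) (Suc (Suc n)) (\<lambda>l k j i. - shift_mat k l i j)"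

definition iso_ST_inv :: "nat \<Rightarrow> nat \<Rightarrow> nat \<Rightarrow> 'a::ring_1" where
  "iso_ST_inv n = block_mat (Suc (Suc n)) (Suc n) (\<lambda>j i l k. - shift_mat_inv i j k l)"

lemma iso_TS_mult_inv:
  assumes "q < Suc n * Suc (Suc n)" "q' < Suc n * Suc (Suc n)"
  shows "(\<Sum>r<Suc (Suc n) * Suc n. iso_TS n q r * iso_TS_inv n r q') = (if q = q' then 1 else (0::'a::ring_1))"
proof -
  have bounds: "q div Suc (Suc n) \<le> n" "q' div Suc (Suc n) \<le> n"
    using assms by (simp_all only: div_le_of_less_mult)
  have "(\<Sum>r<Suc (Suc n) * Suc n. iso_TS n q r * iso_TS_inv n r q')
      = (if q div Suc (Suc n) = q' div Suc (Suc n) \<and> q mod Suc (Suc n) = q' mod Suc (Suc n)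
         then 1 else 0)"
    unfolding iso_TS_def iso_TS_inv_def sum_block_mat_mult
    by (rule shift_mat_mult_inv) (use bounds in \<open>simp_all add: less_Suc_eq_le[symmetric]\<close>)
  then show ?thesis
    by (simp only: block_index_eq_iff)
qed

lemma iso_TS_inv_mult:
  assumes "c < Suc (Suc n) * Suc n" "c' < Suc (Suc n) * Suc n"
  shows "(\<Sum>r<Suc n * Suc (Suc n). iso_TS_inv n c r * iso_TS n r c') = (if c = c' then 1 else (0::'a::ring_1))"
proof -
  have bounds: "c div Suc n \<le> Suc n" "c' div Suc n \<le> Suc n"
    using assms by (simp_all only: div_le_of_less_mult)
  have "(\<Sum>r<Suc n * Suc (Suc n). iso_TS_inv n c r * iso_TS n r c')
      = (if c div Suc n = c' div Suc n \<and> c mod Suc n = c' mod Suc n then 1 else 0)"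
    unfolding iso_TS_def iso_TS_inv_def sum_block_mat_mult
    by (rule shift_mat_inv_mult) (use bounds in \<open>simp_all add: less_Suc_eq_le[symmetric]\<close>)
  then show ?thesis
    by (simp only: block_index_eq_iff)
qed

lemma iso_ST_mult_inv:
  assumes "q < Suc (Suc n) * Suc n" "q' < Suc (Suc n) * Suc n"
  shows "(\<Sum>r<Suc n * Suc (Suc n). iso_ST n q r * iso_ST_inv n r q') = (if q = q' then 1 else (0::'a::ring_1))"
proof -
  have bounds: "q div Suc n \<le> Suc n" "q' div Suc n \<le> Suc n"
    using assms by (simp_all only: div_le_of_less_mult)
  have "(\<Sum>r<Suc n * Suc (Suc n). iso_ST n q r * iso_ST_inv n r q')
      = (\<Sum>y<Suc (Suc n). \<Sum>x<Suc n. shift_mat (q mod Suc n) (q div Suc n) y x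
           * shift_mat_inv y x (q' mod Suc n) (q' div Suc n))"
    unfolding iso_ST_def iso_ST_inv_def sum_block_mat_mult minus_mult_minus by (rule sum.swap)
  also have "\<dots> = (if q mod Suc n = q' mod Suc n \<and> q div Suc n = q' div Suc n then 1 else 0)"
    by (rule shift_mat_mult_inv) (use bounds in \<open>simp_all add: less_Suc_eq_le[symmetric]\<close>)
  finally show ?thesis
    by (simp only: block_index_eq_iff conj_commute)
qed

lemma iso_ST_inv_mult:
  assumes "c < Suc n * Suc (Suc n)" "c' < Suc n * Suc (Suc n)"
  shows "(\<Sum>r<Suc (Suc n) * Suc n. iso_ST_inv n c r * iso_ST n r c') = (if c = c' then 1 else (0::'a::ring_1))"
proof -
  have bounds: "c div Suc (Suc n) \<le> n" "c' div Suc (Suc n) \<le> n"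
    using assms by (simp_all only: div_le_of_less_mult)
  have "(\<Sum>r<Suc (Suc n) * Suc n. iso_ST_inv n c r * iso_ST n r c')
      = (\<Sum>y<Suc n. \<Sum>x<Suc (Suc n). shift_mat_inv (c mod Suc (Suc n)) (c div Suc (Suc n)) y x
           * shift_mat y x (c' mod Suc (Suc n)) (c' div Suc (Suc n)))"
    unfolding iso_ST_def iso_ST_inv_def sum_block_mat_mult minus_mult_minus by (rule sum.swap)
  also have "\<dots> = (if c mod Suc (Suc n) = c' mod Suc (Suc n) \<and> c div Suc (Suc n) = c' div Suc (Suc n)
      then 1 else 0)"
    by (rule shift_mat_inv_mult) (use bounds in \<open>simp_all add: less_Suc_eq_le[symmetric]\<close>)
  finally show ?thesis
    by (simp only: block_index_eq_iff conj_commute)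
qed

lemma heq_TS_entry_core:
  "heq (t * gDel * gDelInv * (gA * s' + gB * s) - t' * gDel * gDelInv * (gC * s' + gD * s))
       ((t' * Sinv_gen GC + t * Sinv_gen GD) * gDel * s' - (t' * Sinv_gen GA + t * Sinv_gen GB) * gDel * s)"
proof -
  let ?E = "t * (gA * s' + gB * s) - t' * (gC * s' + gD * s)"
  have "heq (t * (gDel * gDelInv) * (gA * s' + gB * s) - t' * (gDel * gDelInv) * (gC * s' + gD * s)) ?E"
    by (intro heq_diff heq_cancel_del_delinv)
  then have lhs: "heq (t * gDel * gDelInv * (gA * s' + gB * s) - t' * gDel * gDelInv * (gC * s' + gD * s)) ?E"
    by (simp add: mult.assoc)
  have "heq ((t * gA) * (gDelInv * gDel) * s' + (t * gB) * (gDelInv * gDel) * s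
             - ((t' * gC) * (gDelInv * gDel) * s' + (t' * gD) * (gDelInv * gDel) * s))
            ((t * gA) * s' + (t * gB) * s - ((t' * gC) * s' + (t' * gD) * s))"
    by (intro heq_diff heq_add heq_cancel_delinv_del)
  then have rhs: "heq ((t' * Sinv_gen GC + t * Sinv_gen GD) * gDel * s'
      - (t' * Sinv_gen GA + t * Sinv_gen GB) * gDel * s) ?E"
    by (simp add: algebra_simps)
  show ?thesis
    by (rule heq_trans[OF lhs heq_sym[OF rhs]])
qed

lemma ST_entry_core:
  "(s' * gC + s * gD) * gDelInv * (t' * gDel) - (s' * gA + s * gB) * gDelInv * (t * gDel)
   = s * ((Sinv_gen GA * t' + Sinv_gen GB * t) * gDel) - s' * ((Sinv_gen GC * t' + Sinv_gen GD * t) * gDel)"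
  by (simp add: algebra_simps)

lemma iso_TS_intertwines:
  assumes q: "q < Suc (Suc n) * Suc n" and c: "c < Suc (Suc n) * Suc n"
  shows "heq (\<Sum>r<Suc (Suc n) * Suc n.
                snd (ctensor (ctensor (TnV n) cRinv) (SnV (Suc n))) q r * fconst (iso_TS n r c))
             (\<Sum>r<Suc (Suc n) * Suc n. fconst (iso_TS n q r) * snd (ctensor (TnV (Suc n)) (SnV n)) r c)"
proof -
  define k l i j where "k = q div Suc (Suc n)" and "l = q mod Suc (Suc n)"
    and "i = c div Suc n" and "j = c mod Suc n"
  have dim: "Suc (Suc n) * Suc n = Suc n * Suc (Suc n)"
    by simp
  have k: "k \<le> n"
    using q unfolding k_def dim by (rule div_le_of_less_mult)
  have i: "i \<le> Suc n"
    using c unfolding i_def by (rule div_le_of_less_mult)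
  have j: "j \<le> n" and l: "l \<le> Suc n"
    by (simp_all add: j_def l_def less_Suc_eq_le[symmetric])
  let ?s = "prod_coeff (SnV_factors n j) l" and ?s' = "prod_coeff_prev (SnV_factors n j) l"
  let ?t = "prod_coeff (SnV_factors' n k) i" and ?t' = "prod_coeff_prev (SnV_factors' n k) i"
  have "(\<Sum>r<Suc (Suc n) * Suc n.
           snd (ctensor (ctensor (TnV n) cRinv) (SnV (Suc n))) q r * fconst (iso_TS n r c))
      = (\<Sum>x<Suc n. \<Sum>y<Suc (Suc n).
           (Sinv (SnV_coeff n x k) * gDel * gDelInv * SnV_coeff (Suc n) l y) * shift_mat x y i j)"
    unfolding dim ctensor_TnV_cRinv_SnV iso_TS_def block_mat_def fconst_shift_mat snd_conv k_def l_def i_def j_def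
    by (rule sum_block_index)
  also have "\<dots> = Sinv (SnV_coeff n i k) * gDel * gDelInv * SnV_coeff (Suc n) l (Suc j)
      - (if i = 0 then 0 else Sinv (SnV_coeff n (i - 1) k)) * gDel * gDelInv * SnV_coeff (Suc n) l j"
    unfolding sum_mult_shift_mat using i j k by (auto simp: Sinv_SnV_coeff_eq_0)
  also have "heq \<dots> (?t * gDel * gDelInv * (gA * ?s' + gB * ?s) - ?t' * gDel * gDelInv * (gC * ?s' + gD * ?s))"
    unfolding Sinv_SnV_coeff_prev[OF k]
    unfolding Sinv_SnV_coeff_eq_prod_coeff[OF k] SnV_coeff_Suc_b_left[OF j]
    by (intro heq_diff heq_mult heq_refl SnV_coeff_Suc_d_left j)
  also have "heq \<dots> ((?t' * Sinv_gen GC + ?t * Sinv_gen GD) * gDel * ?s'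
      - (?t' * Sinv_gen GA + ?t * Sinv_gen GB) * gDel * ?s)"
    by (rule heq_TS_entry_core)
  also have "heq \<dots> (Sinv (SnV_coeff (Suc n) i k) * gDel * (if l = 0 then 0 else SnV_coeff n (l - 1) j)
      - Sinv (SnV_coeff (Suc n) i (Suc k)) * gDel * SnV_coeff n l j)"
    unfolding SnV_coeff_prev[OF j]
    unfolding SnV_coeff_eq_prod_coeff[OF j] Sinv_SnV_coeff_Suc_b_right[OF k]
    by (intro heq_diff heq_mult heq_refl heq_sym[OF Sinv_SnV_coeff_Suc_d_right[OF k]])
  also have "\<dots> = (\<Sum>x<Suc (Suc n). \<Sum>y<Suc n.
      shift_mat k l x y * (Sinv (SnV_coeff (Suc n) i x) * gDel * SnV_coeff n y j))"
    unfolding sum_shift_mat_mult using k j l by (auto simp: SnV_coeff_eq_0)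
  also have "\<dots> = (\<Sum>r<Suc (Suc n) * Suc n. fconst (iso_TS n q r) * snd (ctensor (TnV (Suc n)) (SnV n)) r c)"
    unfolding ctensor_TnV_SnV iso_TS_def block_mat_def fconst_shift_mat snd_conv k_def l_def i_def j_def
    by (rule sum_block_index[symmetric])
  finally show ?thesis .
qed

lemma iso_ST_intertwines:
  assumes q: "q < Suc n * Suc (Suc n)" and c: "c < Suc n * Suc (Suc n)"
  shows "heq (\<Sum>r<Suc n * Suc (Suc n).
                snd (ctensor (ctensor (SnV (Suc n)) cRinv) (TnV n)) q r * fconst (iso_ST n r c))
             (\<Sum>r<Suc n * Suc (Suc n). fconst (iso_ST n q r) * snd (ctensor (SnV n) (TnV (Suc n))) r c)"
proof -
  define l k j i where "l = q div Suc n" and "k = q mod Suc n"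
    and "j = c div Suc (Suc n)" and "i = c mod Suc (Suc n)"
  have dim: "Suc n * Suc (Suc n) = Suc (Suc n) * Suc n"
    by simp
  have l: "l \<le> Suc n"
    using q unfolding l_def dim by (rule div_le_of_less_mult)
  have j: "j \<le> n"
    using c unfolding j_def by (rule div_le_of_less_mult)
  have k: "k \<le> n" and i: "i \<le> Suc n"
    by (simp_all add: k_def i_def less_Suc_eq_le[symmetric])
  let ?s = "prod_coeff (SnV_factors n j) l" and ?s' = "prod_coeff_prev (SnV_factors n j) l"
  let ?t = "prod_coeff (SnV_factors' n k) i" and ?t' = "prod_coeff_prev (SnV_factors' n k) i"
  have "(\<Sum>r<Suc n * Suc (Suc n).
           snd (ctensor (ctensor (SnV (Suc n)) cRinv) (TnV n)) q r * fconst (iso_ST n r c))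
      = (\<Sum>x<Suc (Suc n). \<Sum>y<Suc n.
           (SnV_coeff (Suc n) l x * gDelInv * (Sinv (SnV_coeff n y k) * gDel)) * - shift_mat y x i j)"
    unfolding dim ctensor_SnV_cRinv_TnV iso_ST_def block_mat_def fconst_uminus fconst_shift_mat snd_conv
      l_def k_def j_def i_def
    by (rule sum_block_index)
  also have "\<dots> = (\<Sum>y<Suc n. \<Sum>x<Suc (Suc n).
      - (SnV_coeff (Suc n) l x * gDelInv * (Sinv (SnV_coeff n y k) * gDel)) * shift_mat y x i j)"
    by (subst sum.swap) (simp only: mult_minus_left mult_minus_right)
  also have "\<dots> = SnV_coeff (Suc n) l j * gDelInv * ((if i = 0 then 0 else Sinv (SnV_coeff n (i - 1) k)) * gDel)
      - SnV_coeff (Suc n) l (Suc j) * gDelInv * (Sinv (SnV_coeff n i k) * gDel)"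
    unfolding sum_mult_shift_mat using i j k by (auto simp: Sinv_SnV_coeff_eq_0)
  also have "heq \<dots> ((?s' * gC + ?s * gD) * gDelInv * (?t' * gDel) - (?s' * gA + ?s * gB) * gDelInv * (?t * gDel))"
    unfolding Sinv_SnV_coeff_prev[OF k]
    unfolding Sinv_SnV_coeff_eq_prod_coeff[OF k] SnV_coeff_Suc_d_right[OF j]
    by (intro heq_diff heq_mult heq_refl SnV_coeff_Suc_b_right j)
  also have "\<dots> = ?s * ((Sinv_gen GA * ?t' + Sinv_gen GB * ?t) * gDel)
      - ?s' * ((Sinv_gen GC * ?t' + Sinv_gen GD * ?t) * gDel)"
    by (rule ST_entry_core)
  also have "heq \<dots> (SnV_coeff n l j * (Sinv (SnV_coeff (Suc n) i (Suc k)) * gDel)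
      - (if l = 0 then 0 else SnV_coeff n (l - 1) j) * (Sinv (SnV_coeff (Suc n) i k) * gDel))"
    unfolding SnV_coeff_prev[OF j]
    unfolding SnV_coeff_eq_prod_coeff[OF j] Sinv_SnV_coeff_Suc_d_left[OF k]
    by (intro heq_diff heq_mult heq_refl heq_sym[OF Sinv_SnV_coeff_Suc_b_left[OF k]])
  also have "\<dots> = (\<Sum>y<Suc (Suc n). \<Sum>x<Suc n.
      shift_mat k l y x * - (SnV_coeff n x j * (Sinv (SnV_coeff (Suc n) i y) * gDel)))"
    unfolding sum_shift_mat_mult using k j l by (auto simp: SnV_coeff_eq_0)
  also have "\<dots> = (\<Sum>x<Suc n. \<Sum>y<Suc (Suc n).
      - shift_mat k l y x * (SnV_coeff n x j * (Sinv (SnV_coeff (Suc n) i y) * gDel)))"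
    by (subst sum.swap) (simp only: mult_minus_left mult_minus_right)
  also have "\<dots> = (\<Sum>r<Suc n * Suc (Suc n). fconst (iso_ST n q r) * snd (ctensor (SnV n) (TnV (Suc n))) r c)"
    unfolding ctensor_SnV_TnV iso_ST_def block_mat_def fconst_uminus fconst_shift_mat snd_conv
      l_def k_def j_def i_def
    by (rule sum_block_index[symmetric])
  finally show ?thesis .
qed

lemma comod_iso_TS:
  "comod_iso (ctensor (TnV (Suc n)) (SnV n) :: 'k::ring_1 comod) (ctensor (ctensor (TnV n) cRinv) (SnV (Suc n)))"
proof -
  let ?V = "ctensor (TnV (Suc n)) (SnV n) :: 'k comod"
  let ?W = "ctensor (ctensor (TnV n) cRinv) (SnV (Suc n)) :: 'k comod"
  have "comod_iso (Suc (Suc n) * Suc n, snd ?V) (Suc (Suc n) * Suc n, snd ?W)"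
  proof (rule comod_isoI[where P = "iso_TS n" and Q = "iso_TS_inv n"])
    fix i j assume "i < Suc (Suc n) * Suc n" "j < Suc (Suc n) * Suc n"
    then show "(\<Sum>l<Suc (Suc n) * Suc n. iso_TS n i l * iso_TS_inv n l j) = (if i = j then 1 else (0::'k))"
      and "(\<Sum>l<Suc (Suc n) * Suc n. iso_TS_inv n i l * iso_TS n l j) = (if i = j then 1 else (0::'k))"
      and "heq (\<Sum>l<Suc (Suc n) * Suc n. snd ?W i l * fconst (iso_TS n l j))
               (\<Sum>l<Suc (Suc n) * Suc n. fconst (iso_TS n i l) * snd ?V l j)"
      using iso_TS_mult_inv[of i n j] iso_TS_inv_mult[of i n j] iso_TS_intertwines[of i n j]
      by (simp_all only: mult.commute True_implies_equals)
  qed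
  then show ?thesis
    by (simp add: ctensor_TnV_SnV ctensor_TnV_cRinv_SnV)
qed

lemma comod_iso_ST:
  "comod_iso (ctensor (SnV n) (TnV (Suc n)) :: 'k::ring_1 comod) (ctensor (ctensor (SnV (Suc n)) cRinv) (TnV n))"
proof -
  let ?V = "ctensor (SnV n) (TnV (Suc n)) :: 'k comod"
  let ?W = "ctensor (ctensor (SnV (Suc n)) cRinv) (TnV n) :: 'k comod"
  have "comod_iso (Suc n * Suc (Suc n), snd ?V) (Suc n * Suc (Suc n), snd ?W)"
  proof (rule comod_isoI[where P = "iso_ST n" and Q = "iso_ST_inv n"])
    fix i j assume "i < Suc n * Suc (Suc n)" "j < Suc n * Suc (Suc n)"
    then show "(\<Sum>l<Suc n * Suc (Suc n). iso_ST n i l * iso_ST_inv n l j) = (if i = j then 1 else (0::'k))"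
      and "(\<Sum>l<Suc n * Suc (Suc n). iso_ST_inv n i l * iso_ST n l j) = (if i = j then 1 else (0::'k))"
      and "heq (\<Sum>l<Suc n * Suc (Suc n). snd ?W i l * fconst (iso_ST n l j))
               (\<Sum>l<Suc n * Suc (Suc n). fconst (iso_ST n i l) * snd ?V l j)"
      using iso_ST_mult_inv[of i n j] iso_ST_inv_mult[of i n j] iso_ST_intertwines[of i n j]
      by (simp_all only: mult.commute True_implies_equals)
  qed
  then show ?thesis
    by (simp add: ctensor_SnV_TnV ctensor_SnV_cRinv_TnV)
qed

theorem mainTheorem17:
  fixes a :: nat
  assumes "alg_closed_type TYPE('k::field_char_0)"
    and "a \<ge> 1"
  shows "comod_iso (ctensor (TnV a) (SnV (a - 1)) :: 'k comod)
                   (ctensor (ctensor (TnV (a - 1)) cRinv) (SnV a))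
       \<and> comod_iso (ctensor (SnV (a - 1)) (TnV a) :: 'k comod)
                   (ctensor (ctensor (SnV a) cRinv) (TnV (a - 1)))"
proof -
  obtain n where "a = Suc n"
    using assms(2) by (cases a) auto
  then show ?thesis
    using comod_iso_TS[of n] comod_iso_ST[of n] by simp
qed

end
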